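(* Let $G$ be an amenable (discrete) group and let $(X,u)$, $(Y,v)$ be $G$-spaces with $X$ $G$-complemented in its bidual. Then two exact sequences of $G$-spaces $$0\to X\xrightarrow{i}Z_1\xrightarrow{q}Y\to0,\qquad 0\to X\xrightarrow{j}Z_2\xrightarrow{p}Y\to0$$ are equivalent in the category of $G$-spaces if and only if they are equivalent as exact sequences of Banach spaces. In particular such an exact sequence of $G$-spaces $G$-splits if and only if it splits.
   Context: A $G$-space is a Banach space with a bounded action of $G$ ($u(gh)=u(g)u(h)$, $\sup\|u(g)\|<\infty$). An exact sequence of $G$-spaces is an exact sequence of Banach spaces in which each space is a $G$-space and the arrows are bounded linear $G$-equivariant maps ($Tu(g)=v(g)T$); here the actions on $X$ and $Y$ are $u$ and $v$. Two such sequences are equivalent as Banach sequences if there is a bounded linear $T:Z_1\to Z_2$ with $Ti=j$ and $pT=q$; equivalent in the category of $G$-spaces if such a $T$ can be chosen $G$-equivariant. A sequence splits if it is Banach-equivalent to $0\to X\to X\oplus Y\to Y\to0$, and $G$-splits if it is $G$-equivalent to this sequence with the diagonal action $(x,y)\mapsto(u(g)x,v(g)y)$ (equivalently, the quotient map admits a bounded linear $G$-equivariant right inverse). $X$ is $G$-complemented in its bidual if there is a bounded projection $P:X^{**}\to X$ with $Pu(g)^{**}=u(g)P$ for all $g$. *)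

theory Defs
  imports "HOL-Analysis.Analysis" "HOL-Algebra.Group"
begin

definition amenable :: "('g, 'b) monoid_scheme \<Rightarrow> bool" where
  "amenable G \<longleftrightarrow> (\<exists>m :: ('g \<Rightarrow> real) \<Rightarrow> real.
     (\<forall>f h. bounded (f ` carrier G) \<longrightarrow> bounded (h ` carrier G) \<longrightarrow>
         m (\<lambda>x. f x + h x) = m f + m h) \<and>
     (\<forall>c f. bounded (f ` carrier G) \<longrightarrow> m (\<lambda>x. c * f x) = c * m f) \<and>
     (\<forall>f. bounded (f ` carrier G) \<longrightarrow> (\<forall>x\<in>carrier G. 0 \<le> f x) \<longrightarrow> 0 \<le> m f) \<and>
     m (\<lambda>x. 1) = 1 \<and>
     (\<forall>g\<in>carrier G. \<forall>f. bounded (f ` carrier G) \<longrightarrow>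
         m (\<lambda>x. f (g \<otimes>\<^bsub>G\<^esub> x)) = m f))"

definition G_space :: "('g, 'b) monoid_scheme \<Rightarrow> ('g \<Rightarrow> ('x::real_normed_vector \<Rightarrow>\<^sub>L 'x)) \<Rightarrow> bool" where
  "G_space G u \<longleftrightarrow>
     (\<forall>g\<in>carrier G. \<forall>h\<in>carrier G. u (g \<otimes>\<^bsub>G\<^esub> h) = u g o\<^sub>L u h) \<and>
     (\<exists>C. \<forall>g\<in>carrier G. norm (u g) \<le> C)"

definition equivariant :: "('g, 'b) monoid_scheme \<Rightarrow> ('g \<Rightarrow> ('x::real_normed_vector \<Rightarrow>\<^sub>L 'x))
    \<Rightarrow> ('g \<Rightarrow> ('y::real_normed_vector \<Rightarrow>\<^sub>L 'y)) \<Rightarrow> ('x \<Rightarrow>\<^sub>L 'y) \<Rightarrow> bool" where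
  "equivariant G u v T \<longleftrightarrow> (\<forall>g\<in>carrier G. T o\<^sub>L u g = v g o\<^sub>L T)"

definition exact_seq :: "('x::real_normed_vector \<Rightarrow>\<^sub>L 'z::real_normed_vector) \<Rightarrow> ('z \<Rightarrow>\<^sub>L 'y::real_normed_vector) \<Rightarrow> bool" where
  "exact_seq i q \<longleftrightarrow> inj (blinfun_apply i) \<and> surj (blinfun_apply q) \<and>
     range (blinfun_apply i) = {z. q z = 0}"

definition G_exact_seq :: "('g, 'b) monoid_scheme \<Rightarrow> ('g \<Rightarrow> ('x::real_normed_vector \<Rightarrow>\<^sub>L 'x))
    \<Rightarrow> ('g \<Rightarrow> ('z::real_normed_vector \<Rightarrow>\<^sub>L 'z)) \<Rightarrow> ('g \<Rightarrow> ('y::real_normed_vector \<Rightarrow>\<^sub>L 'y))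
    \<Rightarrow> ('x \<Rightarrow>\<^sub>L 'z) \<Rightarrow> ('z \<Rightarrow>\<^sub>L 'y) \<Rightarrow> bool" where
  "G_exact_seq G u w v i q \<longleftrightarrow> G_space G u \<and> G_space G w \<and> G_space G v \<and>
     exact_seq i q \<and> equivariant G u w i \<and> equivariant G w v q"

definition seq_equiv :: "('x::real_normed_vector \<Rightarrow>\<^sub>L 'z1::real_normed_vector) \<Rightarrow> ('z1 \<Rightarrow>\<^sub>L 'y::real_normed_vector)
    \<Rightarrow> ('x \<Rightarrow>\<^sub>L 'z2::real_normed_vector) \<Rightarrow> ('z2 \<Rightarrow>\<^sub>L 'y) \<Rightarrow> bool" where
  "seq_equiv i q j p \<longleftrightarrow> (\<exists>T :: 'z1 \<Rightarrow>\<^sub>L 'z2. T o\<^sub>L i = j \<and> p o\<^sub>L T = q)"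

definition G_seq_equiv :: "('g, 'b) monoid_scheme
    \<Rightarrow> ('g \<Rightarrow> ('z1::real_normed_vector \<Rightarrow>\<^sub>L 'z1)) \<Rightarrow> ('g \<Rightarrow> ('z2::real_normed_vector \<Rightarrow>\<^sub>L 'z2))
    \<Rightarrow> ('x::real_normed_vector \<Rightarrow>\<^sub>L 'z1) \<Rightarrow> ('z1 \<Rightarrow>\<^sub>L 'y::real_normed_vector)
    \<Rightarrow> ('x \<Rightarrow>\<^sub>L 'z2) \<Rightarrow> ('z2 \<Rightarrow>\<^sub>L 'y) \<Rightarrow> bool" where
  "G_seq_equiv G w1 w2 i q j p \<longleftrightarrow>
     (\<exists>T :: 'z1 \<Rightarrow>\<^sub>L 'z2. T o\<^sub>L i = j \<and> p o\<^sub>L T = q \<and> equivariant G w1 w2 T)"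

definition inl_blinfun :: "'x::real_normed_vector \<Rightarrow>\<^sub>L ('x \<times> 'y::real_normed_vector)" where
  "inl_blinfun = Blinfun (\<lambda>x. (x, 0))"

definition diag_action :: "('g \<Rightarrow> ('x::real_normed_vector \<Rightarrow>\<^sub>L 'x)) \<Rightarrow> ('g \<Rightarrow> ('y::real_normed_vector \<Rightarrow>\<^sub>L 'y))
    \<Rightarrow> 'g \<Rightarrow> (('x \<times> 'y) \<Rightarrow>\<^sub>L ('x \<times> 'y))" where
  "diag_action u v g = Blinfun (\<lambda>z. (u g (fst z), v g (snd z)))"

definition splits :: "('x::real_normed_vector \<Rightarrow>\<^sub>L 'z::real_normed_vector) \<Rightarrow> ('z \<Rightarrow>\<^sub>L 'y::real_normed_vector) \<Rightarrow> bool" where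
  "splits i q \<longleftrightarrow> seq_equiv i q (inl_blinfun :: 'x \<Rightarrow>\<^sub>L ('x \<times> 'y)) snd_blinfun"

definition G_splits :: "('g, 'b) monoid_scheme \<Rightarrow> ('g \<Rightarrow> ('x::real_normed_vector \<Rightarrow>\<^sub>L 'x))
    \<Rightarrow> ('g \<Rightarrow> ('z::real_normed_vector \<Rightarrow>\<^sub>L 'z)) \<Rightarrow> ('g \<Rightarrow> ('y::real_normed_vector \<Rightarrow>\<^sub>L 'y))
    \<Rightarrow> ('x \<Rightarrow>\<^sub>L 'z) \<Rightarrow> ('z \<Rightarrow>\<^sub>L 'y) \<Rightarrow> bool" where
  "G_splits G u w v i q \<longleftrightarrow>
     G_seq_equiv G w (diag_action u v) i q (inl_blinfun :: 'x \<Rightarrow>\<^sub>L ('x \<times> 'y)) snd_blinfun"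

definition dual_map :: "('a::real_normed_vector \<Rightarrow>\<^sub>L 'c::real_normed_vector)
    \<Rightarrow> (('c \<Rightarrow>\<^sub>L real) \<Rightarrow>\<^sub>L ('a \<Rightarrow>\<^sub>L real))" where
  "dual_map A = Blinfun (\<lambda>f. f o\<^sub>L A)"

definition canon_emb :: "'a::real_normed_vector \<Rightarrow>\<^sub>L (('a \<Rightarrow>\<^sub>L real) \<Rightarrow>\<^sub>L real)" where
  "canon_emb = Blinfun (\<lambda>x. Blinfun (\<lambda>f::'a \<Rightarrow>\<^sub>L real. blinfun_apply f x))"

definition G_complemented_in_bidual :: "('g, 'b) monoid_scheme \<Rightarrow> ('g \<Rightarrow> ('x::real_normed_vector \<Rightarrow>\<^sub>L 'x)) \<Rightarrow> bool" where
  "G_complemented_in_bidual G u \<longleftrightarrow>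
     (\<exists>P :: ((('x \<Rightarrow>\<^sub>L real) \<Rightarrow>\<^sub>L real) \<Rightarrow>\<^sub>L 'x).
        (\<forall>x. blinfun_apply P (blinfun_apply canon_emb x) = x) \<and>
        (\<forall>g\<in>carrier G. P o\<^sub>L dual_map (dual_map (u g)) = u g o\<^sub>L P))"

end

theory Submission
  imports Defs
begin

text \<open>
  Let \<open>T\<close> be a bounded equivalence of the two sequences, \<open>T i = j\<close> and \<open>p T = q\<close>. Its failure
  to be equivariant is measured by \<open>D g = w\<^sub>2(g) T w\<^sub>1(g\<^sup>-\<^sup>1) - w\<^sub>2(1) T w\<^sub>1(1)\<close>, which vanishes
  on \<open>i(X)\<close> and takes values in \<open>ker p = j(X)\<close>. Since \<open>j\<close> has closed range it is bounded below
  (Baire category), so \<open>D = j \<beta>\<close> for a uniformly bounded 1-cocycle \<open>\<beta>\<close> with values in \<open>L(Z\<^sub>1, X)\<close>.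
  Averaging \<open>g \<mapsto> \<beta>(g) z\<close> with an invariant mean gives an element of \<open>X\<^sup>*\<^sup>*\<close>, and the equivariant
  projection \<open>P : X\<^sup>*\<^sup>* \<rightarrow> X\<close> turns this into an operator \<open>B\<close> exhibiting \<open>\<beta>\<close> as a coboundary.
  Then \<open>T + j B\<close>, suitably cut down by the idempotents \<open>w\<^sub>1(1)\<close>, \<open>w\<^sub>2(1)\<close>, is an equivariant
  equivalence. Splitting is the case of the trivial sequence with the diagonal action.
\<close>

section \<open>Operators with closed range\<close>

lemma closure_image_cball_nonempty_interior:
  fixes A :: "'a::banach \<Rightarrow>\<^sub>L 'b::banach"
  assumes "closed (range A)"
  obtains N y \<epsilon> where "\<epsilon> > 0" "y \<in> range A"
    "\<And>w. w \<in> range A \<Longrightarrow> dist w y < \<epsilon> \<Longrightarrow> w \<in> closure (A ` cball 0 N)"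
proof -
  define W where "W = range (blinfun_apply A)"
  define F where "F n = W \<inter> closure (A ` cball 0 (real n))" for n :: nat
  have W_complete: "completely_metrizable_space (top_of_set W)"
    using assms closed_closedin completely_metrizable_space_closedin
      completely_metrizable_space_euclidean
    unfolding W_def by blast
  have W_covered: "\<Union>(range F) = W"
  proof (intro equalityI subsetI)
    fix w assume "w \<in> W"
    then obtain x where x: "w = A x" unfolding W_def by blast
    obtain n :: nat where "norm x \<le> real n" using real_arch_simple by blast
    then have "w \<in> F n"
      using \<open>w \<in> W\<close> closure_subset unfolding F_def x by fastforce
    then show "w \<in> \<Union>(range F)" by blast
  qed (auto simp: F_def)
  have "\<exists>n. top_of_set W interior_of F n \<noteq> {}"
  proof (rule ccontr)
    assume no_interior: "\<nexists>n. top_of_set W interior_of F n \<noteq> {}"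
    have "top_of_set W interior_of \<Union>(range F) = {}"
    proof (rule Baire_category_alt)
      fix S assume "S \<in> range F"
      then obtain n where "S = F n" by blast
      then show "closedin (top_of_set W) S \<and> top_of_set W interior_of S = {}"
        using no_interior unfolding F_def by (simp add: closedin_closed_Int)
    qed (use W_complete in simp_all)
    moreover have "0 \<in> W" unfolding W_def by (metis blinfun.zero_right rangeI)
    ultimately show False
      using W_covered interior_of_topspace[of "top_of_set W"] by simp
  qed
  then obtain n y where y: "y \<in> top_of_set W interior_of F n" by blast
  have F_interior: "top_of_set W interior_of F n \<subseteq> F n" by (rule interior_of_subset)
  have "openin (top_of_set W) (top_of_set W interior_of F n)" by (rule openin_interior_of)
  then obtain \<epsilon> where "\<epsilon> > 0" and \<epsilon>: "ball y \<epsilon> \<inter> W \<subseteq> top_of_set W interior_of F n"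
    using y unfolding openin_contains_ball by blast
  moreover have "y \<in> W"
    using y F_interior unfolding F_def by blast
  moreover have "w \<in> closure (A ` cball 0 (real n))" if "w \<in> W" "dist w y < \<epsilon>" for w
  proof -
    have "w \<in> top_of_set W interior_of F n"
      using that \<epsilon> by (auto simp: dist_commute)
    then show ?thesis using F_interior unfolding F_def by blast
  qed
  ultimately show thesis using that unfolding W_def by blast
qed

lemma closed_range_approximate_preimage:
  fixes A :: "'a::banach \<Rightarrow>\<^sub>L 'b::banach"
  assumes "closed (range A)"
  obtains C where "C > 0"
    "\<And>w. w \<in> range A \<Longrightarrow> \<exists>x. norm x \<le> C * norm w \<and> norm (A x - w) \<le> norm w / 2"
proof -
  obtain \<epsilon> y N where "\<epsilon> > 0" and y: "y \<in> range A"
    and near_y: "\<And>w. w \<in> range A \<Longrightarrow> dist w y < \<epsilon> \<Longrightarrow> w \<in> closure (A ` cball 0 N)"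
    by (rule closure_image_cball_nonempty_interior[OF assms]) blast
  define M where "M = 2 * max N 0"
  have small: "\<exists>x. norm x \<le> M \<and> norm (A x - w) < \<delta>"
    if w: "w \<in> range A" "norm w < \<epsilon>" and "\<delta> > 0" for w \<delta>
  proof -
    obtain a b where "y = A a" "w = A b" using w y by blast
    then have "y + w \<in> range A" by (metis blinfun.add_right rangeI)
    then have "y + w \<in> closure (A ` cball 0 N)"
      using near_y w by (simp add: dist_norm)
    then obtain z1 where "z1 \<in> A ` cball 0 N" "dist z1 (y + w) < \<delta>/2"
      using \<open>\<delta> > 0\<close> closure_approachable half_gt_zero by blast
    then obtain x1 where x1: "norm x1 \<le> N" "dist (A x1) (y + w) < \<delta>/2" by auto
    have "y \<in> closure (A ` cball 0 N)"
      using near_y y \<open>\<epsilon> > 0\<close> by simp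
    then obtain z2 where "z2 \<in> A ` cball 0 N" "dist z2 y < \<delta>/2"
      using \<open>\<delta> > 0\<close> closure_approachable half_gt_zero by blast
    then obtain x2 where x2: "norm x2 \<le> N" "dist (A x2) y < \<delta>/2" by auto
    have "norm (x1 - x2) \<le> M"
      using norm_triangle_ineq4[of x1 x2] x1 x2 unfolding M_def by linarith
    moreover have "norm (A (x1 - x2) - w) < \<delta>"
    proof -
      have "A (x1 - x2) - w = (A x1 - (y + w)) - (A x2 - y)"
        by (simp add: blinfun.diff_right)
      then have "norm (A (x1 - x2) - w) \<le> norm (A x1 - (y + w)) + norm (A x2 - y)"
        by (metis norm_triangle_ineq4)
      then show ?thesis using x1 x2 by (simp add: dist_norm)
    qed
    ultimately show ?thesis by blast
  qed
  define C where "C = 2 * M / \<epsilon> + 1"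
  show thesis
  proof (rule that)
    show "C > 0" unfolding C_def M_def using \<open>\<epsilon> > 0\<close> by (simp add: add_nonneg_pos)
    fix w assume w: "w \<in> range A"
    show "\<exists>x. norm x \<le> C * norm w \<and> norm (A x - w) \<le> norm w / 2"
    proof (cases "w = 0")
      case True
      then show ?thesis by (intro exI[of _ 0]) simp
    next
      case False
      define s where "s = \<epsilon> / (2 * norm w)"
      have "s > 0" using False \<open>\<epsilon> > 0\<close> unfolding s_def by simp
      \<comment> \<open>Rescale \<open>w\<close> into the ball of radius \<open>\<epsilon>\<close>, approximate there, and scale back.\<close>
      obtain a where "w = A a" using w by blast
      then have "s *\<^sub>R w \<in> range A" by (metis blinfun.scaleR_right rangeI)
      moreover have "norm (s *\<^sub>R w) < \<epsilon>"
        using \<open>s > 0\<close> False \<open>\<epsilon> > 0\<close> unfolding s_def by simp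
      moreover have "s * (norm w / 2) > 0" using \<open>s > 0\<close> False by simp
      ultimately obtain x' where x': "norm x' \<le> M" "norm (A x' - s *\<^sub>R w) < s * (norm w / 2)"
        using small by blast
      define x where "x = (1/s) *\<^sub>R x'"
      have "norm x \<le> M / s"
        using x' \<open>s > 0\<close> unfolding x_def by (simp add: divide_right_mono)
      also have "\<dots> = 2 * M / \<epsilon> * norm w"
        unfolding s_def using False \<open>\<epsilon> > 0\<close> by simp
      also have "\<dots> \<le> C * norm w"
        unfolding C_def by (simp add: distrib_right)
      finally have "norm x \<le> C * norm w" .
      moreover have "A x - w = (1/s) *\<^sub>R (A x' - s *\<^sub>R w)"
        unfolding x_def using \<open>s > 0\<close> by (simp add: blinfun.scaleR_right scaleR_diff_right)
      then have "norm (A x - w) \<le> norm w / 2"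
        using x' \<open>s > 0\<close> by (simp add: divide_le_eq mult.commute)
      ultimately show ?thesis by blast
    qed
  qed
qed

lemma successive_approximation_preimage:
  fixes A :: "'a::banach \<Rightarrow>\<^sub>L 'b::real_normed_vector"
  assumes "0 \<le> C"
    and approx: "\<And>w. w \<in> range A \<Longrightarrow> \<exists>x. norm x \<le> C * norm w \<and> norm (A x - w) \<le> norm w / 2"
    and "w \<in> range A"
  shows "\<exists>x. A x = w \<and> norm x \<le> 2 * C * norm w"
proof -
  have "\<forall>w\<in>range A. \<exists>x. norm x \<le> C * norm w \<and> norm (A x - w) \<le> norm w / 2"
    using approx by blast
  then obtain step where step: "\<And>w. w \<in> range A \<Longrightarrow>
      norm (step w) \<le> C * norm w \<and> norm (A (step w) - w) \<le> norm w / 2"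
    by metis
  define r where "r k = ((\<lambda>v. v - A (step v)) ^^ k) w" for k
  have r_0: "r 0 = w" and r_Suc: "r (Suc k) = r k - A (step (r k))" for k
    unfolding r_def by simp_all
  have r_range: "r k \<in> range A" for k
  proof (induction k)
    case 0 then show ?case using \<open>w \<in> range A\<close> by (simp add: r_0)
  next
    case (Suc k)
    then obtain a where "r k = A a" by blast
    then show ?case by (metis r_Suc blinfun.diff_right rangeI)
  qed
  have r_norm: "norm (r k) \<le> norm w * (1/2)^k" for k
  proof (induction k)
    case 0 then show ?case by (simp add: r_0)
  next
    case (Suc k)
    have "norm (r (Suc k)) \<le> norm (r k) / 2"
      using step[OF r_range] by (simp add: r_Suc norm_minus_commute)
    then show ?case using Suc by simp
  qed
  define x where "x k = step (r k)" for k
  have x_norm: "norm (x k) \<le> C * norm w * (1/2)^k" for k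
    using order_trans[OF conjunct1[OF step[OF r_range]] mult_left_mono[OF r_norm \<open>0 \<le> C\<close>]]
    unfolding x_def by (simp add: mult.assoc)
  have geometric: "summable (\<lambda>k. C * norm w * (1/2::real)^k)"
    by (intro summable_mult summable_geometric) simp
  have norm_summable: "summable (\<lambda>k. norm (x k))"
    using x_norm by (intro summable_comparison_test'[OF geometric]) simp
  have partial_sums: "(\<Sum>k<n. A (x k)) = w - r n" for n
    by (induction n) (simp_all add: r_0 r_Suc x_def)
  have "(\<lambda>k. norm w * (1/2::real)^k) \<longlonglongrightarrow> 0"
    by (intro tendsto_mult_right_zero LIMSEQ_power_zero) simp
  then have "r \<longlonglongrightarrow> 0"
    by (rule Lim_null_comparison[OF always_eventually[OF allI[OF r_norm]]])
  then have "(\<lambda>n. w - r n) \<longlonglongrightarrow> w - 0"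
    by (intro tendsto_diff tendsto_const)
  then have "(\<lambda>k. A (x k)) sums w"
    unfolding sums_def partial_sums by simp
  then have "A (suminf x) = w"
    using bounded_linear.suminf[OF blinfun.bounded_linear_right summable_norm_cancel[OF norm_summable]]
    by (metis sums_unique)
  moreover have "norm (suminf x) \<le> 2 * C * norm w"
  proof -
    have "norm (suminf x) \<le> (\<Sum>k. norm (x k))" by (rule summable_norm[OF norm_summable])
    also have "\<dots> \<le> (\<Sum>k. C * norm w * (1/2::real)^k)" by (rule suminf_le[OF x_norm norm_summable geometric])
    also have "\<dots> = 2 * C * norm w" by (simp add: suminf_mult suminf_geometric)
    finally show ?thesis .
  qed
  ultimately show ?thesis by blast
qed

lemma closed_range_bounded_below:
  fixes A :: "'a::banach \<Rightarrow>\<^sub>L 'b::banach"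
  assumes "inj A" "closed (range A)"
  obtains K where "K > 0" "\<And>x. norm x \<le> K * norm (A x)"
proof -
  obtain C where "C > 0" and approx:
    "\<And>w. w \<in> range A \<Longrightarrow> \<exists>x. norm x \<le> C * norm w \<and> norm (A x - w) \<le> norm w / 2"
    using closed_range_approximate_preimage[OF assms(2)] by blast
  have "norm x \<le> (2 * C) * norm (A x)" for x
  proof -
    obtain x' where "A x' = A x" "norm x' \<le> 2 * C * norm (A x)"
      using successive_approximation_preimage[OF _ approx, of "A x"] \<open>C > 0\<close> by auto
    moreover have "x' = x" using \<open>A x' = A x\<close> \<open>inj A\<close> by (simp add: inj_eq)
    ultimately show ?thesis by simp
  qed
  with \<open>C > 0\<close> show thesis by (intro that[of "2 * C"]) auto
qed

section \<open>Invariant means and averaging in the bidual\<close>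

lemma dual_map_apply [simp]: "dual_map A f = f o\<^sub>L A"
  unfolding dual_map_def
  by (simp add: bounded_linear_Blinfun_apply bounded_bilinear.bounded_linear_left[OF bounded_bilinear_blinfun_compose])

lemma canon_emb_apply [simp]: "canon_emb x f = f x"
proof -
  have apply_at: "bounded_linear (\<lambda>f::'a \<Rightarrow>\<^sub>L real. f x)" for x :: "'a::real_normed_vector"
    by (rule bounded_bilinear.bounded_linear_left[OF bounded_bilinear_blinfun_apply])
  define ev where "ev x = Blinfun (\<lambda>f::'a \<Rightarrow>\<^sub>L real. f x)" for x :: 'a
  have ev_apply: "ev x f = f x" for x f
    unfolding ev_def by (simp add: bounded_linear_Blinfun_apply[OF apply_at])
  have "bounded_linear ev"
  proof (rule bounded_linear_intro[where K = 1])
    show "ev (x + y) = ev x + ev y" for x y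
      by (rule blinfun_eqI) (simp add: ev_apply blinfun.add_left blinfun.add_right)
    show "ev (r *\<^sub>R x) = r *\<^sub>R ev x" for r x
      by (rule blinfun_eqI) (simp add: ev_apply blinfun.scaleR_left blinfun.scaleR_right)
    show "norm (ev x) \<le> norm x * 1" for x
      by (rule norm_blinfun_bound) (simp_all add: ev_apply, metis norm_blinfun real_norm_def mult.commute)
  qed
  then show ?thesis
    unfolding canon_emb_def ev_def[symmetric] by (simp add: bounded_linear_Blinfun_apply ev_apply)
qed

lemma abs_blinfun_apply_le:
  fixes f :: "'a::real_normed_vector \<Rightarrow>\<^sub>L real"
  assumes "norm x \<le> M"
  shows "\<bar>f x\<bar> \<le> norm f * M"
  using norm_blinfun[of f x] mult_left_mono[OF assms norm_ge_zero[of f]] by simp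

lemma bounded_const_image: "bounded ((\<lambda>x. c) ` S)"
  by (rule bounded_subset[of "{c}"]) auto

lemma bounded_blinfun_image_comp:
  "bounded (f ` S) \<Longrightarrow> bounded ((\<lambda>s. blinfun_apply A (f s)) ` S)"
  using bounded_linear_image[OF _ blinfun.bounded_linear_right, of "f ` S" A]
  by (simp add: image_image)

locale invariant_mean = monoid +
  fixes m :: "('a \<Rightarrow> real) \<Rightarrow> real"
  assumes mean_add: "bounded (f ` carrier G) \<Longrightarrow> bounded (h ` carrier G) \<Longrightarrow>
      m (\<lambda>x. f x + h x) = m f + m h"
    and mean_scale: "bounded (f ` carrier G) \<Longrightarrow> m (\<lambda>x. c * f x) = c * m f"
    and mean_nonneg: "bounded (f ` carrier G) \<Longrightarrow> (\<And>x. x \<in> carrier G \<Longrightarrow> 0 \<le> f x) \<Longrightarrow> 0 \<le> m f"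
    and mean_one: "m (\<lambda>x. 1) = 1"
    and mean_left_translate: "g \<in> carrier G \<Longrightarrow> bounded (f ` carrier G) \<Longrightarrow>
      m (\<lambda>x. f (g \<otimes> x)) = m f"

lemma (in monoid) amenable_iff_invariant_mean: "amenable G \<longleftrightarrow> (\<exists>m. invariant_mean G m)"
  unfolding amenable_def invariant_mean_def invariant_mean_axioms_def
  by (simp add: monoid_axioms) (intro ex_cong1; blast)

context invariant_mean
begin

lemma mean_const: "m (\<lambda>x. c) = c"
  using mean_scale[OF bounded_const_image[of 1 "carrier G"], of c] mean_one by simp

lemma mean_diff:
  assumes "bounded (f ` carrier G)" "bounded (h ` carrier G)"
  shows "m (\<lambda>x. f x - h x) = m f - m h"
  using mean_add[OF assms(1) bounded_scaleR_comp[OF assms(2), of "-1"]] mean_scale[OF assms(2), of "-1"]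
  by simp

lemma mean_mono:
  assumes "bounded (f ` carrier G)" "bounded (h ` carrier G)" "\<And>x. x \<in> carrier G \<Longrightarrow> f x \<le> h x"
  shows "m f \<le> m h"
  using mean_nonneg[OF bounded_minus_comp[OF assms(2,1)]] assms(3) mean_diff[OF assms(2,1)] by simp

lemma mean_cong:
  assumes "bounded (f ` carrier G)" "bounded (h ` carrier G)" "\<And>x. x \<in> carrier G \<Longrightarrow> f x = h x"
  shows "m f = m h"
  using mean_mono[OF assms(1,2)] mean_mono[OF assms(2,1)] assms(3) by (simp add: order_antisym)

lemma mean_abs_le:
  assumes "\<And>x. x \<in> carrier G \<Longrightarrow> \<bar>f x\<bar> \<le> M"
  shows "\<bar>m f\<bar> \<le> M"
proof -
  have f: "bounded (f ` carrier G)"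
    using assms by (auto simp: bounded_iff)
  have "f x \<le> M" "- M \<le> f x" if "x \<in> carrier G" for x
    using assms[OF that] by linarith+
  then have "m f \<le> m (\<lambda>x. M)" "m (\<lambda>x. - M) \<le> m f"
    by (auto intro!: mean_mono f bounded_const_image)
  then show ?thesis by (simp add: mean_const)
qed

definition bidual_mean :: "('a \<Rightarrow> 'x::real_normed_vector) \<Rightarrow> ('x \<Rightarrow>\<^sub>L real) \<Rightarrow>\<^sub>L real" where
  "bidual_mean x = Blinfun (\<lambda>f. m (\<lambda>g. blinfun_apply f (x g)))"

lemma bidual_mean_apply:
  fixes x :: "'a \<Rightarrow> 'x::real_normed_vector"
  assumes "bounded (x ` carrier G)"
  shows "bidual_mean x f = m (\<lambda>g. f (x g))"
proof -
  obtain M where M: "\<And>g. g \<in> carrier G \<Longrightarrow> norm (x g) \<le> M"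
    using assms unfolding bounded_iff by blast
  have "bounded_linear (\<lambda>f::'x \<Rightarrow>\<^sub>L real. m (\<lambda>g. f (x g)))"
  proof (rule bounded_linear_intro[where K = M])
    show "m (\<lambda>g. (f1 + f2) (x g)) = m (\<lambda>g. f1 (x g)) + m (\<lambda>g. f2 (x g))" for f1 f2 :: "'x \<Rightarrow>\<^sub>L real"
      using mean_add[OF bounded_blinfun_image_comp[OF assms] bounded_blinfun_image_comp[OF assms]]
      by (simp add: blinfun.add_left)
    show "m (\<lambda>g. (r *\<^sub>R f) (x g)) = r *\<^sub>R m (\<lambda>g. f (x g))" for r and f :: "'x \<Rightarrow>\<^sub>L real"
      using mean_scale[OF bounded_blinfun_image_comp[OF assms]] by (simp add: blinfun.scaleR_left)
    show "norm (m (\<lambda>g. f (x g))) \<le> norm f * M" for f :: "'x \<Rightarrow>\<^sub>L real"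
      unfolding real_norm_def
      by (rule mean_abs_le) (rule abs_blinfun_apply_le[OF M])
  qed
  then show ?thesis
    unfolding bidual_mean_def by (simp add: bounded_linear_Blinfun_apply)
qed

lemma norm_bidual_mean_le:
  fixes x :: "'a \<Rightarrow> 'x::real_normed_vector"
  assumes "\<And>g. g \<in> carrier G \<Longrightarrow> norm (x g) \<le> M"
  shows "norm (bidual_mean x) \<le> M"
proof (rule norm_blinfun_bound)
  show "0 \<le> M" using assms[OF one_closed] norm_ge_zero order_trans by blast
  have "bounded (x ` carrier G)"
    using assms unfolding bounded_iff by blast
  moreover have "\<bar>m (\<lambda>g. f (x g))\<bar> \<le> norm f * M" for f :: "'x \<Rightarrow>\<^sub>L real"
    by (rule mean_abs_le) (rule abs_blinfun_apply_le[OF assms])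
  ultimately show "norm (bidual_mean x f) \<le> M * norm f" for f
    by (simp add: bidual_mean_apply mult.commute)
qed

lemma bidual_mean_cong:
  fixes x y :: "'a \<Rightarrow> 'x::real_normed_vector"
  assumes "bounded (x ` carrier G)" "bounded (y ` carrier G)" "\<And>g. g \<in> carrier G \<Longrightarrow> x g = y g"
  shows "bidual_mean x = bidual_mean y"
  using assms
  by (intro blinfun_eqI) (simp add: bidual_mean_apply mean_cong bounded_blinfun_image_comp)

lemma bidual_mean_add:
  fixes x y :: "'a \<Rightarrow> 'x::real_normed_vector"
  assumes "bounded (x ` carrier G)" "bounded (y ` carrier G)"
  shows "bidual_mean (\<lambda>g. x g + y g) = bidual_mean x + bidual_mean y"
  using assms bounded_plus_comp[OF assms]
  by (intro blinfun_eqI)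
    (simp add: bidual_mean_apply blinfun.add_left blinfun.add_right mean_add bounded_blinfun_image_comp)

lemma bidual_mean_scaleR:
  fixes x :: "'a \<Rightarrow> 'x::real_normed_vector"
  assumes "bounded (x ` carrier G)"
  shows "bidual_mean (\<lambda>g. c *\<^sub>R x g) = c *\<^sub>R bidual_mean x"
  using assms bounded_scaleR_comp[OF assms]
  by (intro blinfun_eqI)
    (simp add: bidual_mean_apply blinfun.scaleR_left blinfun.scaleR_right mean_scale bounded_blinfun_image_comp)

lemma bidual_mean_const: "bidual_mean (\<lambda>g. c) = canon_emb c"
  by (intro blinfun_eqI) (simp add: bidual_mean_apply bounded_const_image mean_const)

lemma bidual_mean_blinfun:
  fixes x :: "'a \<Rightarrow> 'x::real_normed_vector" and A :: "'x \<Rightarrow>\<^sub>L 'y::real_normed_vector"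
  assumes "bounded (x ` carrier G)"
  shows "bidual_mean (\<lambda>g. A (x g)) = dual_map (dual_map A) (bidual_mean x)"
  using assms bounded_blinfun_image_comp[OF assms, of A]
  by (intro blinfun_eqI) (simp add: bidual_mean_apply)

lemma bounded_left_translate:
  assumes "h \<in> carrier G" "bounded (x ` carrier G)"
  shows "bounded ((\<lambda>g. x (h \<otimes> g)) ` carrier G)"
  using assms(2) by (rule bounded_subset) (use assms(1) in auto)

lemma bidual_mean_left_translate:
  fixes x :: "'a \<Rightarrow> 'x::real_normed_vector"
  assumes "h \<in> carrier G" "bounded (x ` carrier G)"
  shows "bidual_mean (\<lambda>g. x (h \<otimes> g)) = bidual_mean x"
proof (rule blinfun_eqI)
  fix f :: "'x \<Rightarrow>\<^sub>L real"
  show "bidual_mean (\<lambda>g. x (h \<otimes> g)) f = bidual_mean x f"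
    using mean_left_translate[OF assms(1) bounded_blinfun_image_comp[OF assms(2)], of f]
    by (simp add: bidual_mean_apply assms bounded_left_translate)
qed


lemma bounded_cocycle_coboundary:
  fixes u :: "'a \<Rightarrow> 'x::real_normed_vector \<Rightarrow>\<^sub>L 'x"
    and w :: "'a \<Rightarrow> 'z::real_normed_vector \<Rightarrow>\<^sub>L 'z"
    and \<beta> :: "'a \<Rightarrow> 'z \<Rightarrow>\<^sub>L 'x"
    and P :: "(('x \<Rightarrow>\<^sub>L real) \<Rightarrow>\<^sub>L real) \<Rightarrow>\<^sub>L 'x"
  assumes P_canon: "\<And>x. P (canon_emb x) = x"
    and P_equivariant: "\<And>g. g \<in> carrier G \<Longrightarrow> P o\<^sub>L dual_map (dual_map (u g)) = u g o\<^sub>L P"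
    and \<beta>_bounded: "\<And>g. g \<in> carrier G \<Longrightarrow> norm (\<beta> g) \<le> L"
    and cocycle: "\<And>g h. g \<in> carrier G \<Longrightarrow> h \<in> carrier G \<Longrightarrow>
      \<beta> (h \<otimes> g) o\<^sub>L w h = (u h o\<^sub>L \<beta> g) + (\<beta> h o\<^sub>L w h)"
  obtains B where "\<And>h. h \<in> carrier G \<Longrightarrow> \<beta> h o\<^sub>L w h = (B o\<^sub>L w h) - (u h o\<^sub>L B)"
    and "\<And>z. (\<And>g. g \<in> carrier G \<Longrightarrow> \<beta> g z = 0) \<Longrightarrow> B z = 0"
proof -
  have orbit_le: "norm (\<beta> g z) \<le> L * norm z" if "g \<in> carrier G" for g z
    using norm_blinfun[of "\<beta> g" z] mult_right_mono[OF \<beta>_bounded[OF that] norm_ge_zero[of z]]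
    by linarith
  then have orbit_bounded: "bounded ((\<lambda>g. \<beta> g z) ` carrier G)" for z
    unfolding bounded_iff by blast
  define \<Phi> where "\<Phi> z = bidual_mean (\<lambda>g. \<beta> g z)" for z
  have "bounded_linear \<Phi>"
  proof (rule bounded_linear_intro[where K = L])
    show "\<Phi> (z1 + z2) = \<Phi> z1 + \<Phi> z2" for z1 z2
      unfolding \<Phi>_def by (simp add: blinfun.add_right bidual_mean_add orbit_bounded)
    show "\<Phi> (r *\<^sub>R z) = r *\<^sub>R \<Phi> z" for r z
      unfolding \<Phi>_def by (simp add: blinfun.scaleR_right bidual_mean_scaleR orbit_bounded)
    show "norm (\<Phi> z) \<le> norm z * L" for z
      unfolding \<Phi>_def mult.commute[of "norm z"] by (rule norm_bidual_mean_le) (rule orbit_le)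
  qed
  define B where "B = P o\<^sub>L Blinfun \<Phi>"
  have B_apply: "B z = P (\<Phi> z)" for z
    unfolding B_def by (simp add: bounded_linear_Blinfun_apply[OF \<open>bounded_linear \<Phi>\<close>])
  show thesis
  proof (rule that)
    fix h assume h: "h \<in> carrier G"
    \<comment> \<open>The mean of the cocycle identity over \<open>g\<close>, using left invariance of the mean.\<close>
    have "\<Phi> (w h z) = dual_map (dual_map (u h)) (\<Phi> z) + canon_emb (\<beta> h (w h z))" for z
    proof -
      have "\<Phi> (w h z) = bidual_mean (\<lambda>g. \<beta> (h \<otimes> g) (w h z))"
        unfolding \<Phi>_def using bidual_mean_left_translate[OF h orbit_bounded] by simp
      also have "\<dots> = bidual_mean (\<lambda>g. u h (\<beta> g z) + \<beta> h (w h z))"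
      proof (rule bidual_mean_cong)
        show "bounded ((\<lambda>g. \<beta> (h \<otimes> g) (w h z)) ` carrier G)"
          using h orbit_bounded by (rule bounded_left_translate)
        show "bounded ((\<lambda>g. u h (\<beta> g z) + \<beta> h (w h z)) ` carrier G)"
          by (intro bounded_plus_comp bounded_blinfun_image_comp orbit_bounded bounded_const_image)
        show "\<beta> (h \<otimes> g) (w h z) = u h (\<beta> g z) + \<beta> h (w h z)" if "g \<in> carrier G" for g
          using arg_cong[OF cocycle[OF that h], of "\<lambda>A. A z"] by (simp add: blinfun.add_left)
      qed
      also have "\<dots> = dual_map (dual_map (u h)) (\<Phi> z) + canon_emb (\<beta> h (w h z))"
        unfolding \<Phi>_def
        by (simp add: bidual_mean_add bidual_mean_blinfun bidual_mean_const orbit_bounded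
            bounded_blinfun_image_comp bounded_const_image)
      finally show ?thesis .
    qed
    then have "B (w h z) = u h (B z) + \<beta> h (w h z)" for z
      using arg_cong[OF P_equivariant[OF h], of "\<lambda>A. A (\<Phi> z)"]
      by (simp add: B_apply blinfun.add_right P_canon)
    then show "\<beta> h o\<^sub>L w h = (B o\<^sub>L w h) - (u h o\<^sub>L B)"
      by (intro blinfun_eqI) (simp add: blinfun.diff_left)
  next
    fix z assume "\<And>g. g \<in> carrier G \<Longrightarrow> \<beta> g z = 0"
    then have "\<Phi> z = bidual_mean (\<lambda>g. 0)"
      unfolding \<Phi>_def by (intro bidual_mean_cong orbit_bounded bounded_const_image)
    then show "B z = 0"
      by (simp add: B_apply bidual_mean_const)
  qed
qed
end


section \<open>Correcting a bounded equivalence to an equivariant one\<close>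

lemmas blinfun_add_diff = blinfun.add_left blinfun.add_right blinfun.diff_left blinfun.diff_right

lemma G_space_apply:
  "G_space G u \<Longrightarrow> g \<in> carrier G \<Longrightarrow> h \<in> carrier G \<Longrightarrow> u (g \<otimes>\<^bsub>G\<^esub> h) x = u g (u h x)"
  unfolding G_space_def by (metis blinfun_apply_blinfun_compose)

lemma G_space_norm_bound:
  assumes "G_space G u"
  obtains C where "0 \<le> C" "\<And>g. g \<in> carrier G \<Longrightarrow> norm (u g) \<le> C"
proof -
  obtain C where "\<forall>g\<in>carrier G. norm (u g) \<le> C"
    using assms unfolding G_space_def by blast
  then show thesis
    using that[of "max C 0"] by (auto intro: max.coboundedI1)
qed

lemma equivariant_apply:
  "equivariant G u w T \<Longrightarrow> g \<in> carrier G \<Longrightarrow> T (u g x) = w g (T x)"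
  unfolding equivariant_def by (metis blinfun_apply_blinfun_compose)

lemma closed_range_exact_seq:
  "exact_seq i q \<Longrightarrow> closed (range (blinfun_apply i))"
  unfolding exact_seq_def
  by (simp add: closed_Collect_eq linear_continuous_on blinfun.bounded_linear_right)

lemma blinfun_lift_through_injective:
  fixes j :: "'x::real_normed_vector \<Rightarrow>\<^sub>L 'z::real_normed_vector"
    and A :: "'w::real_normed_vector \<Rightarrow>\<^sub>L 'z"
  assumes "inj j" "0 \<le> K" "\<And>x. norm x \<le> K * norm (j x)" "range A \<subseteq> range j"
  obtains B where "j o\<^sub>L B = A" "norm B \<le> K * norm A"
proof -
  define lift where "lift z = inv_into UNIV j (A z)" for z
  have j_lift: "j (lift z) = A z" for z
    using assms(4) unfolding lift_def by (simp add: f_inv_into_f subset_eq)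
  have lift_le: "norm (lift z) \<le> K * norm A * norm z" for z
    using assms(3)[of "lift z"] mult_left_mono[OF norm_blinfun[of A z] assms(2)]
    by (simp add: j_lift mult.assoc)
  have "bounded_linear lift"
  proof (rule bounded_linear_intro[where K = "K * norm A"])
    show "lift (x + y) = lift x + lift y" for x y
      using \<open>inj j\<close> by (simp add: inj_eq[symmetric] j_lift blinfun.add_right)
    show "lift (r *\<^sub>R x) = r *\<^sub>R lift x" for r x
      using \<open>inj j\<close> by (simp add: inj_eq[symmetric] j_lift blinfun.scaleR_right)
  qed (use lift_le in \<open>simp add: ac_simps\<close>)
  then show thesis
    using lift_le assms(2)
    by (intro that[of "Blinfun lift"])
      (auto intro!: blinfun_eqI norm_blinfun_bound simp: bounded_linear_Blinfun_apply j_lift)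
qed

lemma blinfun_compose_inj_cancel:
  "inj (blinfun_apply j) \<Longrightarrow> j o\<^sub>L A = j o\<^sub>L A' \<Longrightarrow> A = A'"
  by (intro blinfun_eqI) (metis blinfun_apply_blinfun_compose injD)

definition conjugation_defect :: "('g, 'b) monoid_scheme \<Rightarrow> ('g \<Rightarrow> ('z1::real_normed_vector \<Rightarrow>\<^sub>L 'z1))
    \<Rightarrow> ('g \<Rightarrow> ('z2::real_normed_vector \<Rightarrow>\<^sub>L 'z2)) \<Rightarrow> ('z1 \<Rightarrow>\<^sub>L 'z2) \<Rightarrow> 'g \<Rightarrow> 'z1 \<Rightarrow>\<^sub>L 'z2" where
  "conjugation_defect G w1 w2 T g =
     (w2 g o\<^sub>L T o\<^sub>L w1 (inv\<^bsub>G\<^esub> g)) - (w2 \<one>\<^bsub>G\<^esub> o\<^sub>L T o\<^sub>L w1 \<one>\<^bsub>G\<^esub>)"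

context group
begin

lemma G_space_one_left: "G_space G w \<Longrightarrow> g \<in> carrier G \<Longrightarrow> w \<one> (w g x) = w g x"
  by (metis G_space_apply l_one one_closed)

lemma G_space_one_right: "G_space G w \<Longrightarrow> g \<in> carrier G \<Longrightarrow> w g (w \<one> x) = w g x"
  by (metis G_space_apply r_one one_closed)

lemma conjugation_defect_cocycle:
  assumes w1: "G_space G w1" and w2: "G_space G w2" and g: "g \<in> carrier G" and h: "h \<in> carrier G"
  shows "conjugation_defect G w1 w2 T (h \<otimes> g) o\<^sub>L w1 h =
    (w2 h o\<^sub>L conjugation_defect G w1 w2 T g) + (conjugation_defect G w1 w2 T h o\<^sub>L w1 h)"
proof (rule blinfun_eqI)
  fix z
  have "w1 (inv (h \<otimes> g)) (w1 h z) = w1 (inv g) z"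
    using G_space_apply[OF w1, of "inv (h \<otimes> g)" h z] g h by (simp add: inv_mult_group m_assoc)
  moreover have "w1 (inv h) (w1 h z) = w1 \<one> z"
    using G_space_apply[OF w1, of "inv h" h z] h by simp
  moreover have "w2 (h \<otimes> g) y = w2 h (w2 g y)" for y
    using G_space_apply[OF w2] g h by simp
  ultimately show "(conjugation_defect G w1 w2 T (h \<otimes> g) o\<^sub>L w1 h) z =
      ((w2 h o\<^sub>L conjugation_defect G w1 w2 T g) + (conjugation_defect G w1 w2 T h o\<^sub>L w1 h)) z"
    using h by (simp add: conjugation_defect_def blinfun.add_left blinfun.add_right
        blinfun.diff_left blinfun.diff_right G_space_one_left[OF w1] G_space_one_right[OF w2])
qed

lemma conjugation_defect_kernel:
  assumes "G_space G v" "equivariant G w1 v q" "equivariant G w2 v p" "p o\<^sub>L T = q"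
    and g: "g \<in> carrier G"
  shows "p o\<^sub>L conjugation_defect G w1 w2 T g = 0"
proof -
  have pTw: "p (w2 k (T (w1 k' z))) = v (k \<otimes> k') (q z)" if "k \<in> carrier G" "k' \<in> carrier G" for k k' z
    using that assms(1-3) arg_cong[OF assms(4), of "\<lambda>A. A (w1 k' z)"]
    by (simp add: equivariant_apply G_space_apply)
  then show ?thesis
    using g by (intro blinfun_eqI) (simp add: conjugation_defect_def blinfun_add_diff)
qed

lemma conjugation_defect_vanishes:
  assumes "G_space G u" "equivariant G u w1 i" "equivariant G u w2 j" "T o\<^sub>L i = j"
    and g: "g \<in> carrier G"
  shows "conjugation_defect G w1 w2 T g o\<^sub>L i = 0"
proof -
  have wTi: "w2 k (T (w1 k' (i x))) = j (u (k \<otimes> k') x)" if "k \<in> carrier G" "k' \<in> carrier G" for k k' x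
    using that assms(1-3) arg_cong[OF assms(4), of "\<lambda>A. A (u k' x)"]
    by (simp add: equivariant_apply[symmetric] G_space_apply)
  then show ?thesis
    using g by (intro blinfun_eqI) (simp add: conjugation_defect_def blinfun_add_diff)
qed

lemma conjugation_defect_norm_bound:
  assumes "G_space G w1" "G_space G w2"
  obtains L where "\<And>g. g \<in> carrier G \<Longrightarrow> norm (conjugation_defect G w1 w2 T g) \<le> L"
proof -
  obtain C1 C2 where "0 \<le> C1" "\<And>g. g \<in> carrier G \<Longrightarrow> norm (w1 g) \<le> C1"
    and "0 \<le> C2" "\<And>g. g \<in> carrier G \<Longrightarrow> norm (w2 g) \<le> C2"
    using G_space_norm_bound[OF assms(1)] G_space_norm_bound[OF assms(2)] by metis
  then have conj_le: "norm (w2 g o\<^sub>L T o\<^sub>L w1 k) \<le> C2 * norm T * C1"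
    if "g \<in> carrier G" "k \<in> carrier G" for g k
    using that norm_blinfun_compose[of "w2 g o\<^sub>L T" "w1 k"] norm_blinfun_compose[of "w2 g" T]
    by (smt (verit) mult_mono norm_ge_zero zero_le_mult_iff)
  show thesis
  proof (rule that)
    fix g assume "g \<in> carrier G"
    then show "norm (conjugation_defect G w1 w2 T g) \<le> 2 * (C2 * norm T * C1)"
      unfolding conjugation_defect_def
      using norm_triangle_ineq4 conj_le[of g "inv g"] conj_le[of \<one> \<one>] by (smt (verit) inv_closed one_closed)
  qed
qed

lemma G_seq_equiv_of_defect_coboundary:
  assumes s1: "G_exact_seq G u w1 v i q" and s2: "G_exact_seq G u w2 v j p"
    and Ti: "T o\<^sub>L i = j" and pT: "p o\<^sub>L T = q"
    and coboundary: "\<And>h. h \<in> carrier G \<Longrightarrow>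
      conjugation_defect G w1 w2 T h o\<^sub>L w1 h = (R o\<^sub>L w1 h) - (w2 h o\<^sub>L R)"
    and Ri: "R o\<^sub>L i = 0" and pR: "p o\<^sub>L R = 0"
  shows "G_seq_equiv G w1 w2 i q j p"
proof -
  have u: "G_space G u" and v: "G_space G v" and w1: "G_space G w1" and w2: "G_space G w2"
    and "exact_seq j p" "equivariant G u w1 i" "equivariant G w1 v q"
    and "equivariant G u w2 j" "equivariant G w2 v p"
    using s1 s2 unfolding G_exact_seq_def by auto
  then have eq: "w1 g (i x) = i (u g x)" "q (w1 g z) = v g (q z)"
      "w2 g (j x) = j (u g x)" "p (w2 g y) = v g (p y)" if "g \<in> carrier G" for g x y z
    using that by (simp_all add: equivariant_apply)
  have pj: "p (j x) = 0" for x
    using \<open>exact_seq j p\<close> unfolding exact_seq_def by auto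
  have Ti': "T (i x) = j x" and pT': "p (T z) = q z" for x z
    using Ti pT by (metis blinfun_apply_blinfun_compose)+
  have Ri': "R (i x) = 0" and pR': "p (R z) = 0" for x z
    using Ri pR by (metis blinfun_apply_blinfun_compose blinfun.zero_left)+
  have idem: "u \<one> (u \<one> x) = u \<one> x" "v \<one> (v \<one> y) = v \<one> y" for x y
    using G_space_one_left[OF u] G_space_one_left[OF v] by simp_all
  \<comment> \<open>The actions need not be unital, so \<open>T\<close> is only corrected on the ranges of the idempotents \<open>w1 \<one>\<close>, \<open>w2 \<one>\<close>;
      the complementary block \<open>(1 - w2 \<one>) T (1 - w1 \<one>)\<close> is kept, and both sides kill it.\<close>
  define T' where "T' = (w2 \<one> o\<^sub>L T o\<^sub>L w1 \<one>) + R + ((id_blinfun - w2 \<one>) o\<^sub>L T o\<^sub>L (id_blinfun - w1 \<one>))"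
  have T'_apply: "T' z = w2 \<one> (T (w1 \<one> z)) + R z + (T z - T (w1 \<one> z) - w2 \<one> (T z - T (w1 \<one> z)))" for z
    unfolding T'_def by (simp add: blinfun_add_diff)
  have "T' o\<^sub>L i = j"
    by (intro blinfun_eqI) (simp add: T'_apply eq Ti' Ri' idem blinfun_add_diff)
  moreover have "p o\<^sub>L T' = q"
    by (intro blinfun_eqI) (simp add: T'_apply eq pT' pR' pj idem blinfun_add_diff)
  moreover have "equivariant G w1 w2 T'"
    unfolding equivariant_def
  proof (intro ballI blinfun_eqI)
    fix h z assume h: "h \<in> carrier G"
    have "w2 h (T (w1 \<one> z)) - w2 \<one> (T (w1 h z)) = R (w1 h z) - w2 h (R z)"
      using arg_cong[OF coboundary[OF h], of "\<lambda>A. A z"] h G_space_apply[OF w1, of "inv h" h z]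
      by (simp add: conjugation_defect_def blinfun_add_diff G_space_one_left[OF w1])
    then have "w2 \<one> (T (w1 h z)) + R (w1 h z) = w2 h (T (w1 \<one> z)) + w2 h (R z)"
      by (simp add: algebra_simps)
    then show "(T' o\<^sub>L w1 h) z = (w2 h o\<^sub>L T') z"
      using h by (simp add: T'_apply blinfun_add_diff G_space_one_left G_space_one_right w1 w2)
  qed
  ultimately show ?thesis
    unfolding G_seq_equiv_def by blast
qed

lemma conjugation_defect_lift:
  fixes j :: "'x::banach \<Rightarrow>\<^sub>L 'z2::banach"
  assumes s1: "G_exact_seq G u w1 v i q" and s2: "G_exact_seq G u w2 v j p"
    and Ti: "T o\<^sub>L i = j" and pT: "p o\<^sub>L T = q"
  obtains \<beta> L where "\<And>g. g \<in> carrier G \<Longrightarrow> j o\<^sub>L \<beta> g = conjugation_defect G w1 w2 T g"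
    and "\<And>g. g \<in> carrier G \<Longrightarrow> norm (\<beta> g) \<le> L"
    and "\<And>g h. g \<in> carrier G \<Longrightarrow> h \<in> carrier G \<Longrightarrow>
      \<beta> (h \<otimes> g) o\<^sub>L w1 h = (u h o\<^sub>L \<beta> g) + (\<beta> h o\<^sub>L w1 h)"
    and "\<And>g. g \<in> carrier G \<Longrightarrow> \<beta> g o\<^sub>L i = 0"
proof -
  have u: "G_space G u" and v: "G_space G v" and w1: "G_space G w1" and w2: "G_space G w2"
    and exact: "exact_seq j p" and ei: "equivariant G u w1 i" and eq: "equivariant G w1 v q"
    and ej: "equivariant G u w2 j" and ep: "equivariant G w2 v p"
    using s1 s2 unfolding G_exact_seq_def by auto
  have "inj j" and range_j: "range j = {z. p z = 0}"
    using exact unfolding exact_seq_def by auto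
  obtain K where "K > 0" and K: "\<And>x. norm x \<le> K * norm (j x)"
    using closed_range_bounded_below[OF \<open>inj j\<close> closed_range_exact_seq[OF exact]] by blast
  obtain L where L: "\<And>g. g \<in> carrier G \<Longrightarrow> norm (conjugation_defect G w1 w2 T g) \<le> L"
    using conjugation_defect_norm_bound[OF w1 w2] by blast
  have "\<exists>\<beta>. j o\<^sub>L \<beta> = conjugation_defect G w1 w2 T g \<and> norm \<beta> \<le> K * L" if g: "g \<in> carrier G" for g
  proof -
    have "range (conjugation_defect G w1 w2 T g) \<subseteq> range j"
      using arg_cong[OF conjugation_defect_kernel[OF v eq ep pT g], of blinfun_apply]
      by (auto simp: range_j fun_eq_iff)
    then obtain \<beta> where "j o\<^sub>L \<beta> = conjugation_defect G w1 w2 T g"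
        "norm \<beta> \<le> K * norm (conjugation_defect G w1 w2 T g)"
      using blinfun_lift_through_injective[OF \<open>inj j\<close> _ K] \<open>K > 0\<close> by (metis less_imp_le)
    then show ?thesis
      using mult_left_mono[OF L[OF g], of K] \<open>K > 0\<close> by (meson less_imp_le order_trans)
  qed
  then obtain \<beta> where \<beta>: "\<And>g. g \<in> carrier G \<Longrightarrow> j o\<^sub>L \<beta> g = conjugation_defect G w1 w2 T g"
      and \<beta>_le: "\<And>g. g \<in> carrier G \<Longrightarrow> norm (\<beta> g) \<le> K * L"
    by metis
  note j_cancel = blinfun_compose_inj_cancel[OF \<open>inj j\<close>]
  show thesis
  proof (rule that[OF \<beta> \<beta>_le])
    fix g h assume g: "g \<in> carrier G" and h: "h \<in> carrier G"
    show "\<beta> (h \<otimes> g) o\<^sub>L w1 h = (u h o\<^sub>L \<beta> g) + (\<beta> h o\<^sub>L w1 h)"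
    proof (rule j_cancel, rule blinfun_eqI)
      fix z
      show "(j o\<^sub>L (\<beta> (h \<otimes> g) o\<^sub>L w1 h)) z = (j o\<^sub>L ((u h o\<^sub>L \<beta> g) + (\<beta> h o\<^sub>L w1 h))) z"
        using arg_cong[OF conjugation_defect_cocycle[OF w1 w2 g h, of T], of "\<lambda>A. A z"]
          arg_cong[OF \<beta>[OF g], of "\<lambda>A. A z"] arg_cong[OF \<beta>[OF h], of "\<lambda>A. A (w1 h z)"]
          arg_cong[OF \<beta>[OF m_closed[OF h g]], of "\<lambda>A. A (w1 h z)"] h
        by (simp add: blinfun_add_diff equivariant_apply[OF ej])
    qed
  next
    fix g assume g: "g \<in> carrier G"
    show "\<beta> g o\<^sub>L i = 0"
    proof (rule j_cancel, rule blinfun_eqI)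
      fix x
      show "(j o\<^sub>L (\<beta> g o\<^sub>L i)) x = (j o\<^sub>L 0) x"
        using arg_cong[OF conjugation_defect_vanishes[OF u ei ej Ti g], of "\<lambda>A. A x"]
          arg_cong[OF \<beta>[OF g], of "\<lambda>A. A (i x)"]
        by simp
    qed
  qed
qed

theorem G_seq_equiv_iff_seq_equiv:
  fixes u :: "'a \<Rightarrow> ('x::banach \<Rightarrow>\<^sub>L 'x)" and j :: "'x \<Rightarrow>\<^sub>L 'z2::banach"
  assumes "amenable G" "G_complemented_in_bidual G u"
    and s1: "G_exact_seq G u w1 v i q" and s2: "G_exact_seq G u w2 v j p"
  shows "G_seq_equiv G w1 w2 i q j p \<longleftrightarrow> seq_equiv i q j p"
proof
  assume "G_seq_equiv G w1 w2 i q j p"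
  then show "seq_equiv i q j p"
    unfolding G_seq_equiv_def seq_equiv_def by blast
next
  assume "seq_equiv i q j p"
  then obtain T where Ti: "T o\<^sub>L i = j" and pT: "p o\<^sub>L T = q"
    unfolding seq_equiv_def by blast
  obtain m where m: "invariant_mean G m"
    using assms(1) amenable_iff_invariant_mean by blast
  obtain P :: "(('x \<Rightarrow>\<^sub>L real) \<Rightarrow>\<^sub>L real) \<Rightarrow>\<^sub>L 'x" where P_canon: "\<And>x. P (canon_emb x) = x"
    and P_equivariant: "\<And>g. g \<in> carrier G \<Longrightarrow> P o\<^sub>L dual_map (dual_map (u g)) = u g o\<^sub>L P"
    using assms(2) unfolding G_complemented_in_bidual_def by blast
  obtain \<beta> L where \<beta>: "\<And>g. g \<in> carrier G \<Longrightarrow> j o\<^sub>L \<beta> g = conjugation_defect G w1 w2 T g"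
    and \<beta>_le: "\<And>g. g \<in> carrier G \<Longrightarrow> norm (\<beta> g) \<le> L"
    and cocycle: "\<And>g h. g \<in> carrier G \<Longrightarrow> h \<in> carrier G \<Longrightarrow>
      \<beta> (h \<otimes> g) o\<^sub>L w1 h = (u h o\<^sub>L \<beta> g) + (\<beta> h o\<^sub>L w1 h)"
    and \<beta>_i: "\<And>g. g \<in> carrier G \<Longrightarrow> \<beta> g o\<^sub>L i = 0"
    using conjugation_defect_lift[OF s1 s2 Ti pT] by blast
  obtain B where coboundary: "\<And>h. h \<in> carrier G \<Longrightarrow> \<beta> h o\<^sub>L w1 h = (B o\<^sub>L w1 h) - (u h o\<^sub>L B)"
    and B_zero: "\<And>z. (\<And>g. g \<in> carrier G \<Longrightarrow> \<beta> g z = 0) \<Longrightarrow> B z = 0"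
    using invariant_mean.bounded_cocycle_coboundary[OF m P_canon P_equivariant \<beta>_le cocycle] by blast
  have ej: "equivariant G u w2 j" and "exact_seq j p"
    using s2 unfolding G_exact_seq_def by auto
  show "G_seq_equiv G w1 w2 i q j p"
  proof (rule G_seq_equiv_of_defect_coboundary[OF s1 s2 Ti pT])
    fix h assume h: "h \<in> carrier G"
    show "conjugation_defect G w1 w2 T h o\<^sub>L w1 h = ((j o\<^sub>L B) o\<^sub>L w1 h) - (w2 h o\<^sub>L (j o\<^sub>L B))"
    proof (rule blinfun_eqI)
      fix z
      have "j (\<beta> h (w1 h z)) = conjugation_defect G w1 w2 T h (w1 h z)"
        using arg_cong[OF \<beta>[OF h], of "\<lambda>A. A (w1 h z)"] by simp
      moreover have "\<beta> h (w1 h z) = B (w1 h z) - u h (B z)"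
        using arg_cong[OF coboundary[OF h], of "\<lambda>A. A z"] by (simp add: blinfun_add_diff)
      ultimately show "(conjugation_defect G w1 w2 T h o\<^sub>L w1 h) z =
          (((j o\<^sub>L B) o\<^sub>L w1 h) - (w2 h o\<^sub>L (j o\<^sub>L B))) z"
        using h by (simp add: blinfun_add_diff equivariant_apply[OF ej])
    qed
  next
    have "B (i x) = 0" for x
      using \<beta>_i by (intro B_zero) (metis blinfun_apply_blinfun_compose blinfun.zero_left)
    then show "(j o\<^sub>L B) o\<^sub>L i = 0"
      by (intro blinfun_eqI) simp
  next
    show "p o\<^sub>L (j o\<^sub>L B) = 0"
      using \<open>exact_seq j p\<close> unfolding exact_seq_def by (intro blinfun_eqI) auto
  qed
qed
end


lemma inl_blinfun_apply [simp]: "inl_blinfun x = (x, 0)"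
  unfolding inl_blinfun_def
  by (simp add: bounded_linear_Blinfun_apply bounded_linear_Pair)

lemma diag_action_apply [simp]: "diag_action u v g z = (u g (fst z), v g (snd z))"
  unfolding diag_action_def
  by (simp add: bounded_linear_Blinfun_apply bounded_linear_Pair bounded_linear_fst bounded_linear_snd
      bounded_linear_compose[OF blinfun.bounded_linear_right])

lemma G_space_diag_action:
  fixes u :: "'g \<Rightarrow> ('x::real_normed_vector \<Rightarrow>\<^sub>L 'x)" and v :: "'g \<Rightarrow> ('y::real_normed_vector \<Rightarrow>\<^sub>L 'y)"
  assumes u: "G_space G u" and v: "G_space G v"
  shows "G_space G (diag_action u v)"
  unfolding G_space_def
proof (intro conjI ballI)
  show "diag_action u v (g \<otimes>\<^bsub>G\<^esub> h) = diag_action u v g o\<^sub>L diag_action u v h"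
    if "g \<in> carrier G" "h \<in> carrier G" for g h
    using that by (intro blinfun_eqI) (simp add: G_space_apply[OF u] G_space_apply[OF v])
  obtain Cu Cv where "0 \<le> Cu" and Cu: "\<And>g. g \<in> carrier G \<Longrightarrow> norm (u g) \<le> Cu"
    and "0 \<le> Cv" and Cv: "\<And>g. g \<in> carrier G \<Longrightarrow> norm (v g) \<le> Cv"
    using G_space_norm_bound[OF u] G_space_norm_bound[OF v] by metis
  have "norm (diag_action u v g) \<le> Cu + Cv" if "g \<in> carrier G" for g
  proof (intro norm_blinfun_bound)
    fix z :: "'x \<times> 'y"
    have "norm (u g (fst z)) \<le> Cu * norm z"
      using norm_blinfun[of "u g" "fst z"] norm_fst_le[of "fst z" "snd z"] \<open>0 \<le> Cu\<close> Cu[OF that]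
      by (simp add: mult_mono order_trans)
    moreover have "norm (v g (snd z)) \<le> Cv * norm z"
      using norm_blinfun[of "v g" "snd z"] norm_snd_le[of "snd z" "fst z"] \<open>0 \<le> Cv\<close> Cv[OF that]
      by (simp add: mult_mono order_trans)
    ultimately show "norm (diag_action u v g z) \<le> (Cu + Cv) * norm z"
      using norm_Pair_le[of "u g (fst z)" "v g (snd z)"] by (simp add: distrib_right)
  qed (simp add: \<open>0 \<le> Cu\<close> \<open>0 \<le> Cv\<close>)
  then show "\<exists>C. \<forall>g\<in>carrier G. norm (diag_action u v g) \<le> C" by blast
qed

lemma G_exact_seq_diag_action:
  fixes u :: "'g \<Rightarrow> ('x::real_normed_vector \<Rightarrow>\<^sub>L 'x)" and v :: "'g \<Rightarrow> ('y::real_normed_vector \<Rightarrow>\<^sub>L 'y)"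
  assumes "G_space G u" "G_space G v"
  shows "G_exact_seq G u (diag_action u v) v inl_blinfun snd_blinfun"
proof -
  have "exact_seq (inl_blinfun :: 'x \<Rightarrow>\<^sub>L ('x \<times> 'y)) snd_blinfun"
    unfolding exact_seq_def
    by (auto intro!: injI surjI[of _ "Pair 0"] simp: image_iff intro: exI[where x = "fst _"])
  then show ?thesis
    unfolding G_exact_seq_def equivariant_def
    using assms G_space_diag_action[OF assms] by (auto intro!: blinfun_eqI)
qed

theorem mainTheorem16:
  fixes G :: "('g, 'b) monoid_scheme"
    and u :: "'g \<Rightarrow> ('x::banach \<Rightarrow>\<^sub>L 'x)"
    and v :: "'g \<Rightarrow> ('y::banach \<Rightarrow>\<^sub>L 'y)"
    and w1 :: "'g \<Rightarrow> ('z1::banach \<Rightarrow>\<^sub>L 'z1)"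
    and w2 :: "'g \<Rightarrow> ('z2::banach \<Rightarrow>\<^sub>L 'z2)"
    and i :: "'x \<Rightarrow>\<^sub>L 'z1" and q :: "'z1 \<Rightarrow>\<^sub>L 'y"
    and j :: "'x \<Rightarrow>\<^sub>L 'z2" and p :: "'z2 \<Rightarrow>\<^sub>L 'y"
  assumes "group G" and "amenable G"
    and "G_complemented_in_bidual G u"
    and "G_exact_seq G u w1 v i q"
    and "G_exact_seq G u w2 v j p"
  shows "(G_seq_equiv G w1 w2 i q j p \<longleftrightarrow> seq_equiv i q j p) \<and>
         (G_splits G u w1 v i q \<longleftrightarrow> splits i q)"
proof
  show "G_seq_equiv G w1 w2 i q j p \<longleftrightarrow> seq_equiv i q j p"
    by (rule group.G_seq_equiv_iff_seq_equiv[OF assms])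
  have "G_space G u" "G_space G v"
    using assms(4) unfolding G_exact_seq_def by auto
  then show "G_splits G u w1 v i q \<longleftrightarrow> splits i q"
    unfolding G_splits_def splits_def
    by (rule group.G_seq_equiv_iff_seq_equiv[OF assms(1-4) G_exact_seq_diag_action])
qed

end
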